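(* Fix $\beta>0$ and $u\in\mathbb S^{d-1}$, and let $\mathcal O_u:=\{R_\theta u:\theta\in\mathbb R\}$. For a measurable antisymmetric phase kernel $g:I\times I\to\mathbb R$ ($g(t,s)=-g(s,t)$) set $h_g((x,s),(y,t)):=\beta^{-1}\exp(\beta\langle x,R_{g(s,t)}y\rangle)$ and $\mathcal E_g[\mu]:=\frac12\iint h_g\,d\mu\,d\mu$. (i) Given a measurable $\psi:I\to\mathbb R$, put $g(s,t):=-(\psi(t)-\psi(s))\ (\mathrm{mod}\ 2\pi)$, $x^\psi(s):=R_{\psi(s)}u$ and $\mu^\ast:=\Gamma[x^\psi]$. Then $\mathcal E_g[\mu]\le\mathcal E_g[\mu^\ast]=e^\beta/(2\beta)$ for all $\mu\in\mathcal P_I$; thus $\mu^\ast$ is a global maximizer on $\mathcal P_I$. (ii) For every Borel probability measure $\nu$ on $\mathcal O_u$ there is a measurable $\psi:I\to\mathbb R$ such that the maximizer $\mu^\ast$ of (i) satisfies $(\pi_x)_{\#}\mu^\ast=(x^\psi)_{\#}ds=\nu$. (iii) For $\psi$ and $g$ as in (i), if $\mu\in\mathcal P_I$ satisfies $\mathcal E_g[\mu]=e^\beta/(2\beta)$, then there is a measurable $x:I\to\mathbb S^{d-1}$ with $\mu=\Gamma[x]$ and $x(t)=R_{\psi(t)-\psi(s)}x(s)$ for a.e. $(s,t)$; hence there exists $u'\in\mathbb S^{d-1}$ with $x(s)=R_{\psi(s)}u'$ for a.e. $s$.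
   Context: $\mathbb S^{d-1}\subset\mathbb R^d$ ($d\ge2$). $I:=(0,1]$ with Lebesgue measure $ds$; $\mathcal P_I$ is the set of Borel probability measures on $\mathbb S^{d-1}\times I$ with $I$-marginal $ds$. A fixed two-dimensional subspace $E\subset\mathbb R^d$ is given; $R_\theta\in O(d)$ rotates by angle $\theta$ on $E$ and is the identity on $E^\perp$ (so $R_\theta$ is $2\pi$-periodic in $\theta$). For measurable $x:I\to\mathbb S^{d-1}$, $\Gamma[x]:=(s\mapsto(x(s),s))_{\#}ds$. $\pi_x$ is the projection onto the sphere coordinate. *)

theory Defs
  imports "HOL-Probability.Probability"
begin

definition Iset :: "real set" where "Iset = {0<..1}"

definition Imeas :: "real measure" where "Imeas = restrict_space lborel Iset"

text \<open>Rotation R_theta by angle theta on the plane E spanned by the orthonormal pair (e1,e2)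
  (oriented from e1 towards e2), identity on the orthogonal complement of E.\<close>
definition rot :: "'a::euclidean_space \<Rightarrow> 'a \<Rightarrow> real \<Rightarrow> 'a \<Rightarrow> 'a" where
  "rot e1 e2 \<theta> x = x
     + ((cos \<theta> - 1) * (x \<bullet> e1) - sin \<theta> * (x \<bullet> e2)) *\<^sub>R e1
     + (sin \<theta> * (x \<bullet> e1) + (cos \<theta> - 1) * (x \<bullet> e2)) *\<^sub>R e2"

definition PI :: "('a::euclidean_space \<times> real) measure set" where
  "PI = {\<mu>. prob_space \<mu> \<and> sets \<mu> = sets (borel :: ('a \<times> real) measure)
           \<and> emeasure \<mu> (sphere 0 1 \<times> Iset) = 1
           \<and> (\<forall>A \<in> sets (borel :: real measure).
                 emeasure \<mu> (snd -` A) = emeasure lborel (A \<inter> Iset))}"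

definition Gamma :: "(real \<Rightarrow> 'a::euclidean_space) \<Rightarrow> ('a \<times> real) measure" where
  "Gamma x = distr Imeas borel (\<lambda>s. (x s, s))"

definition energy :: "real \<Rightarrow> 'a::euclidean_space \<Rightarrow> 'a \<Rightarrow> (real \<Rightarrow> real \<Rightarrow> real)
                        \<Rightarrow> ('a \<times> real) measure \<Rightarrow> real" where
  "energy \<beta> e1 e2 g \<mu> = 1/2 * (\<integral>p. (\<integral>q. exp (\<beta> * (fst p \<bullet> rot e1 e2 (g (snd p) (snd q)) (fst q))) / \<beta> \<partial>\<mu>) \<partial>\<mu>)"

text \<open>Phase kernel from psi: g(s,t) = -(psi t - psi s) mod 2pi on I x I (set to 0 outside I x I,
  where the paper leaves it undefined).\<close>
definition phase_kernel :: "(real \<Rightarrow> real) \<Rightarrow> real \<Rightarrow> real \<Rightarrow> real" where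
  "phase_kernel \<psi> s t =
     (if s \<in> Iset \<and> t \<in> Iset
      then (let a = - (\<psi> t - \<psi> s) in a - 2 * pi * of_int \<lfloor>a / (2 * pi)\<rfloor>)
      else 0)"

end

theory Submission
  imports Defs
begin

text \<open>
  For unit vectors x, y the kernel exp (beta <x, R_theta y>) / beta is at most e^beta / beta, with
  equality iff x = R_theta y (Cauchy-Schwarz). Every mu in P_I lives on the sphere, so
  E_g[mu] <= e^beta / (2 beta). On the graph of s \<mapsto> R_psi(s) u the phase kernel
  g(s,t) = psi(s) - psi(t) mod 2 pi exactly undoes the relative rotation, so the bound is attained.
  Conversely, if mu attains it, the inner integral is maximal at mu-a.e. point, in particular at some
  (x0, s0) of the support; there the kernel must be maximal for mu-a.e. (x, t), i.e.
  x = R_(psi(t) - psi(s0)) x0, and the marginal condition identifies mu with this graph measure.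
  For (ii), a law on the orbit is the image under theta \<mapsto> R_theta u of the law of a measurably
  chosen angle, and every law on the real line is the image of ds under its quantile function.
\<close>

section \<open>Rotations in the plane E\<close>

lemma rot_0 [simp]: "rot e1 e2 0 y = y"
  by (simp add: rot_def)

lemma rot_cong: "cos a = cos b \<Longrightarrow> sin a = sin b \<Longrightarrow> rot e1 e2 a y = rot e1 e2 b y"
  by (simp add: rot_def)

lemma rot_add_2pi_multiple: "rot e1 e2 (a + 2 * pi * of_int k) y = rot e1 e2 a y"
  by (rule rot_cong) (simp_all add: cos_add sin_add)

lemma measurable_rot [measurable (raw)]:
  assumes "f \<in> borel_measurable M" "g \<in> borel_measurable M"
  shows "(\<lambda>x. rot e1 e2 (f x) (g x)) \<in> borel_measurable M"
  unfolding rot_def using assms by measurable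

locale orthonormal_pair =
  fixes e1 e2 :: "'a::euclidean_space"
  assumes norm_e1: "norm e1 = 1" and norm_e2: "norm e2 = 1" and inner_e1_e2: "e1 \<bullet> e2 = 0"
begin

lemma inner_basis_simps [simp]: "e1 \<bullet> e1 = 1" "e2 \<bullet> e2 = 1" "e1 \<bullet> e2 = 0" "e2 \<bullet> e1 = 0"
  using norm_e1 norm_e2 inner_e1_e2 by (simp_all add: norm_eq_1 inner_commute)

lemma inner_plane_offset:
  "(y + a *\<^sub>R e1 + b *\<^sub>R e2) \<bullet> e1 = y \<bullet> e1 + a"
  "(y + a *\<^sub>R e1 + b *\<^sub>R e2) \<bullet> e2 = y \<bullet> e2 + b"
  by (simp_all add: inner_add_left)

lemma plane_offset_eqI:
  assumes "v = y + a *\<^sub>R e1 + b *\<^sub>R e2" "w = y + c *\<^sub>R e1 + d *\<^sub>R e2"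
    and "v \<bullet> e1 = w \<bullet> e1" "v \<bullet> e2 = w \<bullet> e2"
  shows "v = w"
  using assms by (simp add: inner_plane_offset)

lemma rot_inner_e1: "rot e1 e2 t y \<bullet> e1 = cos t * (y \<bullet> e1) - sin t * (y \<bullet> e2)"
  unfolding rot_def inner_plane_offset by algebra

lemma rot_inner_e2: "rot e1 e2 t y \<bullet> e2 = sin t * (y \<bullet> e1) + cos t * (y \<bullet> e2)"
  unfolding rot_def inner_plane_offset by algebra

text \<open>Both sides are y plus a combination of e1 and e2, and they have the same components along
  e1 and e2.\<close>

lemma rot_rot: "rot e1 e2 a (rot e1 e2 b y) = rot e1 e2 (a + b) y"
proof (rule plane_offset_eqI)
  let ?z = "rot e1 e2 b y"
  show "rot e1 e2 a ?z = y + ((?z \<bullet> e1 - y \<bullet> e1) + (rot e1 e2 a ?z \<bullet> e1 - ?z \<bullet> e1)) *\<^sub>R e1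
      + ((?z \<bullet> e2 - y \<bullet> e2) + (rot e1 e2 a ?z \<bullet> e2 - ?z \<bullet> e2)) *\<^sub>R e2"
    unfolding rot_inner_e1 rot_inner_e2 unfolding rot_def[of _ _ a] rot_def[of _ _ b]
    by (simp add: algebra_simps)
  show "rot e1 e2 (a + b) y = y + (rot e1 e2 (a + b) y \<bullet> e1 - y \<bullet> e1) *\<^sub>R e1
      + (rot e1 e2 (a + b) y \<bullet> e2 - y \<bullet> e2) *\<^sub>R e2"
    unfolding rot_inner_e1 rot_inner_e2 unfolding rot_def by (simp add: algebra_simps)
qed (simp_all add: rot_inner_e1 rot_inner_e2 cos_add sin_add algebra_simps)

lemma inner_self_plane_offset:
  "(y + a *\<^sub>R e1 + b *\<^sub>R e2) \<bullet> (y + a *\<^sub>R e1 + b *\<^sub>R e2)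
     = y \<bullet> y + (y \<bullet> e1 + a)\<^sup>2 + (y \<bullet> e2 + b)\<^sup>2 - (y \<bullet> e1)\<^sup>2 - (y \<bullet> e2)\<^sup>2"
  unfolding inner_add_left inner_add_right inner_scaleR_left inner_scaleR_right
  by (simp add: inner_commute power2_eq_square algebra_simps)

lemma norm_rot [simp]: "norm (rot e1 e2 t x) = norm x"
proof -
  have "(rot e1 e2 t x \<bullet> e1)\<^sup>2 + (rot e1 e2 t x \<bullet> e2)\<^sup>2 = (x \<bullet> e1)\<^sup>2 + (x \<bullet> e2)\<^sup>2"
    unfolding rot_inner_e1 rot_inner_e2 using sin_cos_squared_add[of t] by algebra
  moreover have "rot e1 e2 t x \<bullet> rot e1 e2 t x = x \<bullet> x + (rot e1 e2 t x \<bullet> e1)\<^sup>2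
      + (rot e1 e2 t x \<bullet> e2)\<^sup>2 - (x \<bullet> e1)\<^sup>2 - (x \<bullet> e2)\<^sup>2"
    unfolding rot_def[of _ _ _ x] inner_self_plane_offset inner_plane_offset ..
  ultimately have "rot e1 e2 t x \<bullet> rot e1 e2 t x = x \<bullet> x"
    by simp
  then show ?thesis
    by (simp add: norm_eq_sqrt_inner)
qed

end

section \<open>The index measure, phase kernels and graph measures\<close>

lemma measurable_fst_borel [measurable]:
  "fst \<in> borel_measurable (borel :: ('a::second_countable_topology \<times> 'b::second_countable_topology) measure)"
  by (subst borel_prod[symmetric]) simp

lemma measurable_snd_borel [measurable]:
  "snd \<in> borel_measurable (borel :: ('a::second_countable_topology \<times> 'b::second_countable_topology) measure)"
  by (subst borel_prod[symmetric]) simp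

lemma Iset_borel [measurable]: "Iset \<in> sets borel"
  by (simp add: Iset_def)

lemma space_Imeas [simp]: "space Imeas = Iset"
  by (simp add: Imeas_def space_restrict_space)

lemma prob_space_Imeas: "prob_space Imeas"
  unfolding Imeas_def
  by (rule prob_spaceI) (simp add: emeasure_restrict_space space_restrict_space Iset_def)

lemma measurable_phase_kernel:
  assumes \<psi>: "\<psi> \<in> borel_measurable Imeas"
    and [measurable]: "f \<in> borel_measurable M" "g \<in> borel_measurable M"
  shows "(\<lambda>x. phase_kernel \<psi> (f x) (g x)) \<in> borel_measurable M"
proof -
  define \<phi> where "\<phi> t = indicator Iset t *\<^sub>R \<psi> t" for t
  have [measurable]: "\<phi> \<in> borel_measurable borel"
    using \<psi> borel_measurable_restrict_space_iff[of Iset lborel \<psi>] unfolding \<phi>_def Imeas_def by simp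
  have "phase_kernel \<psi> s t = (if s \<in> Iset \<and> t \<in> Iset
      then \<phi> s - \<phi> t - 2 * pi * of_int \<lfloor>(\<phi> s - \<phi> t) / (2 * pi)\<rfloor> else 0)" for s t
    by (simp add: phase_kernel_def \<phi>_def Let_def)
  then show ?thesis
    by simp
qed

lemma rot_phase_kernel:
  "s \<in> Iset \<Longrightarrow> t \<in> Iset \<Longrightarrow> rot e1 e2 (phase_kernel \<psi> s t) y = rot e1 e2 (\<psi> s - \<psi> t) y"
  using rot_add_2pi_multiple[of e1 e2 "\<psi> s - \<psi> t" "- \<lfloor>(\<psi> s - \<psi> t) / (2 * pi)\<rfloor>" y]
  by (simp add: phase_kernel_def Let_def)

lemma measurable_graph:
  fixes x :: "real \<Rightarrow> 'a::second_countable_topology"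
  assumes "x \<in> borel_measurable Imeas"
  shows "(\<lambda>s. (x s, s)) \<in> Imeas \<rightarrow>\<^sub>M borel"
proof -
  have "(\<lambda>s. (x s, s)) \<in> Imeas \<rightarrow>\<^sub>M borel \<Otimes>\<^sub>M borel"
    using assms unfolding Imeas_def by (intro measurable_Pair) (auto intro: measurable_restrict_space1)
  then show ?thesis
    by (simp add: borel_prod)
qed

lemma sets_Gamma [simp]: "sets (Gamma x) = sets borel"
  by (simp add: Gamma_def)

lemma prob_space_Gamma: "x \<in> borel_measurable Imeas \<Longrightarrow> prob_space (Gamma x)"
  unfolding Gamma_def by (rule prob_space.prob_space_distr[OF prob_space_Imeas measurable_graph])

lemma integral_Gamma:
  fixes f :: "'a::euclidean_space \<times> real \<Rightarrow> real"
  assumes "x \<in> borel_measurable Imeas" "f \<in> borel_measurable borel"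
  shows "(\<integral>q. f q \<partial>Gamma x) = (\<integral>s. f (x s, s) \<partial>Imeas)"
  unfolding Gamma_def using assms(2) by (rule integral_distr[OF measurable_graph[OF assms(1)]])

lemma distr_Gamma_fst: "x \<in> borel_measurable Imeas \<Longrightarrow> distr (Gamma x) borel fst = distr Imeas borel x"
  unfolding Gamma_def by (subst distr_distr) (auto intro: measurable_graph simp: comp_def)

lemma AE_PI: "\<mu> \<in> PI \<Longrightarrow> AE q in \<mu>. q \<in> sphere 0 1 \<times> Iset"
  by (intro prob_space.AE_prob_1) (auto simp: PI_def measure_def)

lemma Gamma_eqI:
  assumes \<mu>: "\<mu> \<in> PI" and x: "x \<in> borel_measurable Imeas"
    and graph: "AE q in \<mu>. fst q = x (snd q)"
  shows "\<mu> = Gamma x"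
proof (rule measure_eqI)
  have sets_\<mu>: "sets \<mu> = sets borel"
    using \<mu> by (simp add: PI_def)
  then show "sets \<mu> = sets (Gamma x)"
    by simp
  fix A assume "A \<in> sets \<mu>"
  then have A: "A \<in> sets borel"
    by (simp add: sets_\<mu>)
  have "(\<lambda>s. (x s, s)) -` A \<inter> space Imeas \<in> sets Imeas"
    using measurable_sets[OF measurable_graph[OF x] A] .
  then obtain B where B: "B \<in> sets borel" "(\<lambda>s. (x s, s)) -` A \<inter> Iset = Iset \<inter> B"
    by (auto simp: Imeas_def sets_restrict_space)
  have "AE q in \<mu>. q \<in> A \<longleftrightarrow> q \<in> snd -` B"
    using AE_PI[OF \<mu>] graph by eventually_elim (use B(2) in \<open>force simp: prod_eq_iff\<close>)
  then have "emeasure \<mu> A = emeasure \<mu> (snd -` B)"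
    by (rule emeasure_eq_AE) (use A measurable_sets[OF measurable_snd_borel B(1)] sets_\<mu> in simp_all)
  also have "\<dots> = emeasure lborel (B \<inter> Iset)"
    using \<mu> B(1) by (simp add: PI_def)
  also have "\<dots> = emeasure Imeas ((\<lambda>s. (x s, s)) -` A \<inter> space Imeas)"
    unfolding Imeas_def using B by (subst emeasure_restrict_space) (auto simp: Int_commute)
  also have "\<dots> = emeasure (Gamma x) A"
    unfolding Gamma_def using A by (subst emeasure_distr[OF measurable_graph[OF x]]) simp_all
  finally show "emeasure \<mu> A = emeasure (Gamma x) A" .
qed

section \<open>The energy bound and its equality case\<close>

context prob_space
begin

text \<open>A non-integrable function has Bochner integral 0, so for 0 <= c no integrability is needed.\<close>

lemma integral_le_const_nonneg:
  fixes f :: "'a \<Rightarrow> real"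
  assumes "AE x in M. f x \<le> c" "0 \<le> c"
  shows "integral\<^sup>L M f \<le> c"
  using integral_le_const[OF _ assms(1)] assms(2) not_integrable_integral_eq by force

lemma AE_eq_const_if_integral_eq:
  fixes f :: "'a \<Rightarrow> real"
  assumes le: "AE x in M. f x \<le> c" and "c \<noteq> 0" and eq: "integral\<^sup>L M f = c"
  shows "AE x in M. f x = c"
proof -
  have "integrable M f"
    using assms(2,3) not_integrable_integral_eq by metis
  then have int: "integrable M (\<lambda>x. c - f x)" and "integral\<^sup>L M (\<lambda>x. c - f x) = 0"
    using eq by (simp_all add: prob_space)
  moreover have "AE x in M. 0 \<le> c - f x"
    using le by eventually_elim simp
  ultimately have "AE x in M. c - f x = 0"
    using integral_nonneg_eq_0_iff_AE[OF int] by simp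
  then show ?thesis
    by eventually_elim simp
qed

lemma AE_imp_ex:
  assumes "AE x in M. P x"
  shows "\<exists>x\<in>space M. P x"
proof (rule ccontr)
  assume none: "\<not> (\<exists>x\<in>space M. P x)"
  from assms AE_space have "AE x in M. False"
    by eventually_elim (use none in auto)
  then show False
    by simp
qed

end

lemma inner_eq_1_iff_eq:
  fixes x y :: "'a::real_inner"
  assumes "norm x = 1" "norm y = 1"
  shows "x \<bullet> y = 1 \<longleftrightarrow> x = y"
  using norm_cauchy_schwarz_eq[of x y] assms by auto

definition energy_kernel :: "real \<Rightarrow> 'a::euclidean_space \<Rightarrow> 'a \<Rightarrow> (real \<Rightarrow> real \<Rightarrow> real)
    \<Rightarrow> 'a \<times> real \<Rightarrow> 'a \<times> real \<Rightarrow> real" where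
  "energy_kernel \<beta> e1 e2 g p q = exp (\<beta> * (fst p \<bullet> rot e1 e2 (g (snd p) (snd q)) (fst q))) / \<beta>"

lemma energy_eq_integral_energy_kernel:
  "energy \<beta> e1 e2 g \<mu> = 1/2 * (\<integral>p. (\<integral>q. energy_kernel \<beta> e1 e2 g p q \<partial>\<mu>) \<partial>\<mu>)"
  by (simp add: energy_def energy_kernel_def)

lemma measurable_energy_kernel_phase_kernel:
  assumes \<psi>: "\<psi> \<in> borel_measurable Imeas"
    and [measurable]: "P \<in> borel_measurable M" "Q \<in> borel_measurable M"
  shows "(\<lambda>x. energy_kernel \<beta> e1 e2 (phase_kernel \<psi>) (P x) (Q x)) \<in> borel_measurable M"
proof -
  have [measurable]: "(\<lambda>x. phase_kernel \<psi> (snd (P x)) (snd (Q x))) \<in> borel_measurable M"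
    by (rule measurable_phase_kernel[OF \<psi>]) measurable
  show ?thesis
    unfolding energy_kernel_def by measurable
qed

lemma measurable_integral_energy_kernel_phase_kernel:
  assumes \<psi>: "\<psi> \<in> borel_measurable Imeas"
    and \<nu>: "sigma_finite_measure \<nu>" "sets \<nu> = sets borel"
  shows "(\<lambda>p. \<integral>q. energy_kernel \<beta> e1 e2 (phase_kernel \<psi>) p q \<partial>\<nu>) \<in> borel_measurable borel"
proof (rule sigma_finite_measure.borel_measurable_lebesgue_integral[OF \<nu>(1)])
  have "(\<lambda>z. energy_kernel \<beta> e1 e2 (phase_kernel \<psi>) (fst z) (snd z)) \<in> borel_measurable (borel \<Otimes>\<^sub>M borel)"
    by (rule measurable_energy_kernel_phase_kernel[OF \<psi>]) simp_all
  then show "case_prod (energy_kernel \<beta> e1 e2 (phase_kernel \<psi>)) \<in> borel_measurable (borel \<Otimes>\<^sub>M \<nu>)"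
    by (subst measurable_cong_sets[OF sets_pair_measure_cong[OF refl \<nu>(2)] refl])
       (simp add: case_prod_unfold)
qed

context orthonormal_pair
begin

lemma energy_kernel_eq_max_iff:
  assumes "\<beta> > 0" "fst p \<in> sphere 0 1" "fst q \<in> sphere 0 1"
  shows "energy_kernel \<beta> e1 e2 g p q = exp \<beta> / \<beta> \<longleftrightarrow> fst p = rot e1 e2 (g (snd p) (snd q)) (fst q)"
  using assms inner_eq_1_iff_eq[of "fst p" "rot e1 e2 (g (snd p) (snd q)) (fst q)"]
  by (simp add: energy_kernel_def)

lemma energy_kernel_le_max:
  assumes "\<beta> > 0" "fst p \<in> sphere 0 1" "fst q \<in> sphere 0 1"
  shows "energy_kernel \<beta> e1 e2 g p q \<le> exp \<beta> / \<beta>"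
proof -
  have "fst p \<bullet> rot e1 e2 (g (snd p) (snd q)) (fst q) \<le> 1"
    using norm_cauchy_schwarz[of "fst p" "rot e1 e2 (g (snd p) (snd q)) (fst q)"] assms(2,3) by simp
  then show ?thesis
    using assms(1) by (simp add: energy_kernel_def divide_right_mono)
qed

lemma integral_energy_kernel_le_max:
  assumes "\<beta> > 0" "\<mu> \<in> PI" "fst p \<in> sphere 0 1"
  shows "(\<integral>q. energy_kernel \<beta> e1 e2 g p q \<partial>\<mu>) \<le> exp \<beta> / \<beta>"
proof (rule prob_space.integral_le_const_nonneg)
  show "prob_space \<mu>"
    using assms(2) by (simp add: PI_def)
  show "AE q in \<mu>. energy_kernel \<beta> e1 e2 g p q \<le> exp \<beta> / \<beta>"
    using AE_PI[OF assms(2)] by eventually_elim (rule energy_kernel_le_max[OF assms(1,3)], auto)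
qed (use assms(1) in simp)

lemma energy_le_max:
  assumes "\<beta> > 0" "\<mu> \<in> PI"
  shows "energy \<beta> e1 e2 g \<mu> \<le> exp \<beta> / (2 * \<beta>)"
proof -
  have "(\<integral>p. (\<integral>q. energy_kernel \<beta> e1 e2 g p q \<partial>\<mu>) \<partial>\<mu>) \<le> exp \<beta> / \<beta>"
  proof (rule prob_space.integral_le_const_nonneg)
    show "prob_space \<mu>"
      using assms(2) by (simp add: PI_def)
    show "AE p in \<mu>. (\<integral>q. energy_kernel \<beta> e1 e2 g p q \<partial>\<mu>) \<le> exp \<beta> / \<beta>"
      using AE_PI[OF assms(2)] by eventually_elim (use assms integral_energy_kernel_le_max in auto)
  qed (use assms(1) in simp)
  then show ?thesis
    by (simp add: energy_eq_integral_energy_kernel)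
qed

lemma energy_Gamma_rot_orbit:
  assumes \<beta>: "\<beta> > 0" and u: "u \<in> sphere 0 1" and \<psi>: "\<psi> \<in> borel_measurable Imeas"
  shows "energy \<beta> e1 e2 (phase_kernel \<psi>) (Gamma (\<lambda>s. rot e1 e2 (\<psi> s) u)) = exp \<beta> / (2 * \<beta>)"
proof -
  define x where "x = (\<lambda>s. rot e1 e2 (\<psi> s) u)"
  define K where "K = energy_kernel \<beta> e1 e2 (phase_kernel \<psi>)"
  have x: "x \<in> borel_measurable Imeas"
    unfolding x_def using \<psi> by measurable
  interpret Imeas: prob_space Imeas
    by (rule prob_space_Imeas)
  have K_graph: "K (x s, s) (x t, t) = exp \<beta> / \<beta>" if "s \<in> Iset" "t \<in> Iset" for s t
  proof -
    have "rot e1 e2 (phase_kernel \<psi> s t) (x t) = x s"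
      using rot_phase_kernel[OF that, of e1 e2 \<psi> "x t"] by (simp add: x_def rot_rot)
    then show ?thesis
      using energy_kernel_eq_max_iff[OF \<beta>] u by (simp add: K_def x_def)
  qed
  have inner: "(\<integral>q. K (x s, s) q \<partial>Gamma x) = exp \<beta> / \<beta>" if "s \<in> Iset" for s
  proof -
    have "(\<integral>q. K (x s, s) q \<partial>Gamma x) = (\<integral>t. K (x s, s) (x t, t) \<partial>Imeas)"
      by (rule integral_Gamma[OF x]) (unfold K_def, rule measurable_energy_kernel_phase_kernel[OF \<psi>], simp_all)
    also have "\<dots> = (\<integral>t. exp \<beta> / \<beta> \<partial>Imeas)"
      by (rule Bochner_Integration.integral_cong) (simp_all add: K_graph that)
    finally show ?thesis
      using Imeas.prob_space by simp
  qed
  have "(\<integral>p. (\<integral>q. K p q \<partial>Gamma x) \<partial>Gamma x) = (\<integral>s. (\<integral>q. K (x s, s) q \<partial>Gamma x) \<partial>Imeas)"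
    using x prob_space_Gamma[OF x] unfolding K_def
    by (intro integral_Gamma measurable_integral_energy_kernel_phase_kernel[OF \<psi>])
       (simp_all add: prob_space_imp_sigma_finite)
  also have "\<dots> = (\<integral>s. exp \<beta> / \<beta> \<partial>Imeas)"
    by (rule Bochner_Integration.integral_cong) (simp_all add: inner)
  finally show ?thesis
    using Imeas.prob_space by (simp add: energy_eq_integral_energy_kernel K_def x_def)
qed

lemma energy_eq_max_imp_AE_rot_graph:
  assumes \<beta>: "\<beta> > 0" and \<mu>: "\<mu> \<in> PI"
    and max: "energy \<beta> e1 e2 (phase_kernel \<psi>) \<mu> = exp \<beta> / (2 * \<beta>)"
  obtains x0 s0 where "x0 \<in> sphere 0 1" "s0 \<in> Iset"
    "AE q in \<mu>. fst q = rot e1 e2 (\<psi> (snd q) - \<psi> s0) x0"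
proof -
  interpret \<mu>: prob_space \<mu>
    using \<mu> by (simp add: PI_def)
  define K where "K = energy_kernel \<beta> e1 e2 (phase_kernel \<psi>)"
  have "AE p in \<mu>. (\<integral>q. K p q \<partial>\<mu>) = exp \<beta> / \<beta>"
  proof (rule \<mu>.AE_eq_const_if_integral_eq)
    show "AE p in \<mu>. (\<integral>q. K p q \<partial>\<mu>) \<le> exp \<beta> / \<beta>"
      using AE_PI[OF \<mu>] by eventually_elim (use \<beta> \<mu> integral_energy_kernel_le_max in \<open>auto simp: K_def\<close>)
    show "(\<integral>p. (\<integral>q. K p q \<partial>\<mu>) \<partial>\<mu>) = exp \<beta> / \<beta>"
      using max by (simp add: energy_eq_integral_energy_kernel K_def)
  qed (use \<beta> in simp)
  with AE_PI[OF \<mu>] have "AE p in \<mu>. p \<in> sphere 0 1 \<times> Iset \<and> (\<integral>q. K p q \<partial>\<mu>) = exp \<beta> / \<beta>"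
    by eventually_elim simp
  from \<mu>.AE_imp_ex[OF this] obtain x0 s0 where x0: "x0 \<in> sphere 0 1" and s0: "s0 \<in> Iset"
    and int_max: "(\<integral>q. K (x0, s0) q \<partial>\<mu>) = exp \<beta> / \<beta>"
    by auto
  have "AE q in \<mu>. K (x0, s0) q = exp \<beta> / \<beta>"
  proof (rule \<mu>.AE_eq_const_if_integral_eq[OF _ _ int_max])
    show "AE q in \<mu>. K (x0, s0) q \<le> exp \<beta> / \<beta>"
      using AE_PI[OF \<mu>] by eventually_elim (use \<beta> x0 energy_kernel_le_max in \<open>auto simp: K_def\<close>)
  qed (use \<beta> in simp)
  with AE_PI[OF \<mu>] have "AE q in \<mu>. fst q = rot e1 e2 (\<psi> (snd q) - \<psi> s0) x0"
  proof eventually_elim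
    case (elim q)
    then have "x0 = rot e1 e2 (phase_kernel \<psi> s0 (snd q)) (fst q)"
      using energy_kernel_eq_max_iff[OF \<beta>, of "(x0, s0)" q] x0 by (auto simp: K_def)
    also have "\<dots> = rot e1 e2 (\<psi> s0 - \<psi> (snd q)) (fst q)"
      using elim s0 by (auto simp: rot_phase_kernel)
    finally show ?case
      by (simp add: rot_rot)
  qed
  then show thesis
    using that x0 s0 by blast
qed

lemma energy_eq_max_imp_rotating_graph:
  assumes \<beta>: "\<beta> > 0" and \<psi>: "\<psi> \<in> borel_measurable Imeas" and \<mu>: "\<mu> \<in> PI"
    and max: "energy \<beta> e1 e2 (phase_kernel \<psi>) \<mu> = exp \<beta> / (2 * \<beta>)"
  shows "\<exists>x. x \<in> borel_measurable Imeas \<and> (\<forall>s\<in>Iset. x s \<in> sphere 0 1) \<and> \<mu> = Gamma x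
           \<and> (AE st in Imeas \<Otimes>\<^sub>M Imeas. x (snd st) = rot e1 e2 (\<psi> (snd st) - \<psi> (fst st)) (x (fst st)))
           \<and> (\<exists>u' \<in> sphere 0 1. AE s in Imeas. x s = rot e1 e2 (\<psi> s) u')"
proof -
  obtain x0 s0 where x0: "x0 \<in> sphere 0 1"
    and graph: "AE q in \<mu>. fst q = rot e1 e2 (\<psi> (snd q) - \<psi> s0) x0"
    using energy_eq_max_imp_AE_rot_graph[OF \<beta> \<mu> max] .
  define x where "x = (\<lambda>t. rot e1 e2 (\<psi> t - \<psi> s0) x0)"
  have x: "x \<in> borel_measurable Imeas"
    unfolding x_def using \<psi> by measurable
  moreover have "\<mu> = Gamma x"
    using Gamma_eqI[OF \<mu> x] graph by (simp add: x_def)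
  moreover have "x t = rot e1 e2 (\<psi> t - \<psi> s) (x s)" for s t
    by (simp add: x_def rot_rot)
  moreover have "x s = rot e1 e2 (\<psi> s) (rot e1 e2 (- \<psi> s0) x0)" for s
    by (simp add: x_def rot_rot)
  ultimately show ?thesis
    using x0 by (intro exI[of _ x]) (auto simp: x_def)
qed

end

section \<open>Laws on the orbit as images of ds\<close>

lemma distr_Imeas_eq_distr_open_unit_interval:
  assumes [measurable]: "f \<in> borel_measurable borel"
  shows "distr Imeas borel f = distr (restrict_space lborel {0<..<1}) borel f"
proof (rule measure_eqI)
  fix B assume "B \<in> sets (distr Imeas borel f)"
  then have [measurable]: "B \<in> sets borel"
    by simp
  have "AE s in lborel. s \<in> f -` B \<inter> Iset \<longleftrightarrow> s \<in> f -` B \<inter> {0<..<1}"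
    using AE_lborel_singleton[of 1] by eventually_elim (auto simp: Iset_def)
  then have "emeasure lborel (f -` B \<inter> Iset) = emeasure lborel (f -` B \<inter> {0<..<1})"
    by (rule emeasure_eq_AE) simp_all
  then show "emeasure (distr Imeas borel f) B = emeasure (distr (restrict_space lborel {0<..<1}) borel f) B"
    unfolding Imeas_def
    by (simp add: emeasure_distr measurable_restrict_space1 space_restrict_space emeasure_restrict_space)
qed simp

lemma real_distribution_eq_distr_Imeas:
  assumes "real_distribution \<rho>"
  obtains \<psi> where "\<psi> \<in> borel_measurable Imeas" "distr Imeas borel \<psi> = \<rho>"
proof -
  interpret cdf_distribution \<rho>
    using assms by (simp add: cdf_distribution_def)
  define \<psi> where "\<psi> t = indicator {0<..<1} t *\<^sub>R I t" for t
  have \<psi>: "\<psi> \<in> borel_measurable borel"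
    using measurable_CI borel_measurable_restrict_space_iff[of "{0<..<1::real}" borel I]
    unfolding \<psi>_def by simp
  have "distr Imeas borel \<psi> = distr (restrict_space lborel {0<..<1}) borel \<psi>"
    by (rule distr_Imeas_eq_distr_open_unit_interval[OF \<psi>])
  also have "\<dots> = distr (restrict_space lborel {0<..<1}) borel I"
    by (rule distr_cong) (simp_all add: space_restrict_space \<psi>_def)
  also have "\<dots> = \<rho>"
    by (rule distr_I_eq_M)
  finally have "distr Imeas borel \<psi> = \<rho>" .
  moreover have "\<psi> \<in> borel_measurable Imeas"
    using \<psi> unfolding Imeas_def by (intro measurable_restrict_space1) simp
  ultimately show thesis
    using that by blast
qed

lemma distr_Imeas_eq_if_AE_range:
  fixes h :: "real \<Rightarrow> 'b::topological_space"
  assumes \<nu>: "prob_space \<nu>" "sets \<nu> = sets borel" "emeasure \<nu> (range h) = 1"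
    and h [measurable]: "h \<in> borel_measurable borel" and A [measurable]: "A \<in> borel_measurable borel"
    and left_inverse: "\<And>t. h (A (h t)) = h t"
  obtains \<psi> where "\<psi> \<in> borel_measurable Imeas" "distr Imeas borel (\<lambda>s. h (\<psi> s)) = \<nu>"
proof -
  interpret \<nu>: prob_space \<nu>
    by (rule \<nu>(1))
  have A_\<nu>: "A \<in> borel_measurable \<nu>"
    using measurable_cong_sets[OF \<nu>(2) refl] A by blast
  obtain \<psi> where \<psi>: "\<psi> \<in> borel_measurable Imeas" and distr_\<psi>: "distr Imeas borel \<psi> = distr \<nu> borel A"
    using real_distribution_eq_distr_Imeas[OF \<nu>.real_distribution_distr[OF A_\<nu>]] .
  have "AE y in \<nu>. y \<in> range h"
    using \<nu>(3) by (intro \<nu>.AE_prob_1) (simp add: measure_def)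
  then have "AE y in \<nu>. h (A y) = y"
    by eventually_elim (auto simp: left_inverse)
  then have "distr \<nu> borel (\<lambda>y. h (A y)) = distr \<nu> borel (\<lambda>y. y)"
    by (intro distr_cong_AE) (use A_\<nu> \<nu>(2) in \<open>simp_all add: measurable_ident_sets\<close>)
  also have "\<dots> = \<nu>"
    by (rule distr_id2) (simp add: \<nu>(2))
  finally have "distr (distr \<nu> borel A) borel h = \<nu>"
    by (simp add: distr_distr[OF h A_\<nu>] comp_def)
  then show thesis
    using that[OF \<psi>] distr_distr[OF h \<psi>] distr_\<psi> by (simp add: comp_def)
qed

text \<open>Clamping the argument of arccos to [-1, 1] makes the angle a Borel function; off the unit
  circle its value is irrelevant.\<close>

definition signed_arccos :: "real \<Rightarrow> real \<Rightarrow> real" where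
  "signed_arccos c s =
     (if 0 \<le> s then arccos (max (-1) (min 1 c)) else - arccos (max (-1) (min 1 c)))"

lemma measurable_signed_arccos [measurable (raw)]:
  assumes [measurable]: "f \<in> borel_measurable M" "g \<in> borel_measurable M"
  shows "(\<lambda>x. signed_arccos (f x) (g x)) \<in> borel_measurable M"
proof -
  have [measurable]: "(\<lambda>c. arccos (max (-1) (min 1 c))) \<in> borel_measurable borel"
    by (intro borel_measurable_continuous_onI continuous_intros) auto
  show ?thesis
    unfolding signed_arccos_def by measurable
qed

lemma cos_sin_signed_arccos:
  "cos (signed_arccos (cos t) (sin t)) = cos t \<and> sin (signed_arccos (cos t) (sin t)) = sin t"
proof -
  have "max (-1) (min 1 (cos t)) = cos t"
    by simp
  moreover have "sin (arccos (cos t)) = \<bar>sin t\<bar>"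
    by (simp add: sin_arccos sin_squared_eq[symmetric])
  ultimately show ?thesis
    by (auto simp: signed_arccos_def)
qed

text \<open>If u has E-components (a, b) and y = R_t u, the E-components of y are (a, b) rotated by t,
  so the two quotients below are cos t and sin t. If (a, b) = 0, every R_t fixes u and the junk value
  of division by 0 is harmless.\<close>

definition orbit_angle :: "'a::euclidean_space \<Rightarrow> 'a \<Rightarrow> 'a \<Rightarrow> 'a \<Rightarrow> real" where
  "orbit_angle e1 e2 u y =
     (let a = u \<bullet> e1; b = u \<bullet> e2; r = a\<^sup>2 + b\<^sup>2
      in signed_arccos ((a * (y \<bullet> e1) + b * (y \<bullet> e2)) / r) ((a * (y \<bullet> e2) - b * (y \<bullet> e1)) / r))"

lemma measurable_orbit_angle [measurable]: "orbit_angle e1 e2 u \<in> borel_measurable borel"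
  unfolding orbit_angle_def Let_def by measurable

context orthonormal_pair
begin

lemma rot_orbit_angle: "rot e1 e2 (orbit_angle e1 e2 u (rot e1 e2 t u)) u = rot e1 e2 t u"
proof (cases "(u \<bullet> e1)\<^sup>2 + (u \<bullet> e2)\<^sup>2 = 0")
  case True
  then have "rot e1 e2 t' u = u" for t'
    by (simp add: rot_def sum_power2_eq_zero_iff)
  then show ?thesis
    by simp
next
  case False
  let ?a = "u \<bullet> e1" and ?b = "u \<bullet> e2" and ?y = "rot e1 e2 t u"
  have "(?a * (?y \<bullet> e1) + ?b * (?y \<bullet> e2)) / (?a\<^sup>2 + ?b\<^sup>2) = cos t"
    and "(?a * (?y \<bullet> e2) - ?b * (?y \<bullet> e1)) / (?a\<^sup>2 + ?b\<^sup>2) = sin t"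
    using False unfolding rot_inner_e1 rot_inner_e2 by (simp_all add: field_simps power2_eq_square)
  then have "orbit_angle e1 e2 u ?y = signed_arccos (cos t) (sin t)"
    by (simp add: orbit_angle_def Let_def)
  then show ?thesis
    using cos_sin_signed_arccos[of t] by (auto intro: rot_cong)
qed

lemma orbit_distribution_eq_distr_Imeas:
  assumes "prob_space \<nu>" "sets \<nu> = sets borel" "emeasure \<nu> (range (\<lambda>\<theta>. rot e1 e2 \<theta> u)) = 1"
  obtains \<psi> where "\<psi> \<in> borel_measurable Imeas" "distr Imeas borel (\<lambda>s. rot e1 e2 (\<psi> s) u) = \<nu>"
proof -
  have "(\<lambda>\<theta>. rot e1 e2 \<theta> u) \<in> borel_measurable borel"
    by measurable
  then show thesis
    using distr_Imeas_eq_if_AE_range[OF assms _ measurable_orbit_angle rot_orbit_angle] that by blast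
qed

end

theorem theorem3p3:
  fixes \<beta> :: real and u e1 e2 :: "'a::euclidean_space"
  assumes dim: "DIM('a) \<ge> 2"
    and E: "norm e1 = 1" "norm e2 = 1" "e1 \<bullet> e2 = 0"
    and \<beta>: "\<beta> > 0"
    and u: "u \<in> sphere 0 1"
  shows
    "(\<forall>\<psi>. \<psi> \<in> borel_measurable Imeas \<longrightarrow>
        (\<forall>\<mu> \<in> PI. energy \<beta> e1 e2 (phase_kernel \<psi>) \<mu>
                 \<le> energy \<beta> e1 e2 (phase_kernel \<psi>) (Gamma (\<lambda>s. rot e1 e2 (\<psi> s) u)))
      \<and> energy \<beta> e1 e2 (phase_kernel \<psi>) (Gamma (\<lambda>s. rot e1 e2 (\<psi> s) u)) = exp \<beta> / (2 * \<beta>))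
   \<and> (\<forall>\<nu>::'a measure. prob_space \<nu> \<and> sets \<nu> = sets borel
        \<and> emeasure \<nu> (range (\<lambda>\<theta>. rot e1 e2 \<theta> u)) = 1 \<longrightarrow>
        (\<exists>\<psi>. \<psi> \<in> borel_measurable Imeas
           \<and> distr (Gamma (\<lambda>s. rot e1 e2 (\<psi> s) u)) borel fst = distr Imeas borel (\<lambda>s. rot e1 e2 (\<psi> s) u)
           \<and> distr Imeas borel (\<lambda>s. rot e1 e2 (\<psi> s) u) = \<nu>))
   \<and> (\<forall>\<psi> \<mu>. \<psi> \<in> borel_measurable Imeas \<longrightarrow> \<mu> \<in> PI \<longrightarrow>
        energy \<beta> e1 e2 (phase_kernel \<psi>) \<mu> = exp \<beta> / (2 * \<beta>) \<longrightarrow>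
        (\<exists>x. x \<in> borel_measurable Imeas \<and> (\<forall>s\<in>Iset. x s \<in> sphere 0 1)
           \<and> \<mu> = Gamma x
           \<and> (AE st in Imeas \<Otimes>\<^sub>M Imeas. x (snd st) = rot e1 e2 (\<psi> (snd st) - \<psi> (fst st)) (x (fst st)))
           \<and> (\<exists>u' \<in> sphere 0 1. AE s in Imeas. x s = rot e1 e2 (\<psi> s) u')))"
proof -
  interpret orthonormal_pair e1 e2
    using E by unfold_locales
  have orbit_law: "\<exists>\<psi>. \<psi> \<in> borel_measurable Imeas
           \<and> distr (Gamma (\<lambda>s. rot e1 e2 (\<psi> s) u)) borel fst = distr Imeas borel (\<lambda>s. rot e1 e2 (\<psi> s) u)
           \<and> distr Imeas borel (\<lambda>s. rot e1 e2 (\<psi> s) u) = \<nu>"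
    if \<nu>: "prob_space \<nu>" "sets \<nu> = sets borel" "emeasure \<nu> (range (\<lambda>\<theta>. rot e1 e2 \<theta> u)) = 1" for \<nu>
  proof -
    obtain \<psi> where \<psi>: "\<psi> \<in> borel_measurable Imeas" "distr Imeas borel (\<lambda>s. rot e1 e2 (\<psi> s) u) = \<nu>"
      using orbit_distribution_eq_distr_Imeas[OF \<nu>] .
    moreover have "(\<lambda>s. rot e1 e2 (\<psi> s) u) \<in> borel_measurable Imeas"
      using \<psi>(1) by measurable
    ultimately show ?thesis
      using distr_Gamma_fst by blast
  qed
  show ?thesis
    using energy_le_max[OF \<beta>] energy_Gamma_rot_orbit[OF \<beta> u] orbit_law
      energy_eq_max_imp_rotating_graph[OF \<beta>]
    by simp
qed

end
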